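(* Let $\eta\in\mathcal D$ and let $\mathcal M_\eta:=\{x\in\mathbb U:\eta(x)=0\}$. Then \[\eta(x)=\tfrac12\,d_{\mathbb U}(x,\mathcal M_\eta)^2\qquad\text{for all }x\in\mathbb U,\] where $d_{\mathbb U}(x,\mathcal M_\eta):=\inf\{\mathrm{Length}(\alpha):\alpha:[0,1]\to\mathbb U\text{ absolutely continuous},\ \alpha(0)=x,\ \alpha(1)\in\mathcal M_\eta\}$.
   Context: Let $\zeta_{\min}>0$, $\beta\ge2$ an integer, and let $y_1,\dots,y_N\in\mathbb R^D$ be given points. $\mathbb U:=\bigcup_{i=1}^NB(y_i,\zeta_{\min}/2)$ (open Euclidean balls), $\overline{\mathbb U}$ its closure. For $x\in\partial\mathbb U$, $\vec n(x):=\{(x-y_i)/\|x-y_i\|:\|x-y_i\|=\zeta_{\min}/2\}$. $\mathcal D$ is the set of $\eta\in C^\beta(\overline{\mathbb U})$ such that $\|\nabla\eta(x)\|^2=2\eta(x)$ for all $x\in\mathbb U$, and there exists $\delta>0$ with $\langle\nabla\eta(x),n\rangle>\delta$ for all $x\in\partial\mathbb U$ and $n\in\vec n(x)$. *)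

theory Defs
  imports "HOL-Analysis.Analysis"
begin

definition UU :: "real \<Rightarrow> nat \<Rightarrow> (nat \<Rightarrow> 'a::euclidean_space) \<Rightarrow> 'a set" where
  "UU \<zeta> N y = (\<Union>i\<in>{1..N}. ball (y i) (\<zeta> / 2))"

definition nvec :: "real \<Rightarrow> nat \<Rightarrow> (nat \<Rightarrow> 'a::euclidean_space) \<Rightarrow> 'a \<Rightarrow> 'a set" where
  "nvec \<zeta> N y x = {(1 / norm (x - y i)) *\<^sub>R (x - y i) | i. i \<in> {1..N} \<and> norm (x - y i) = \<zeta> / 2}"

text \<open>C^k(closure U) for open U: f is k times differentiable in U and f together with all its
  partial derivatives of order at most k extend continuously to closure U.\<close>
fun Ck_closure :: "nat \<Rightarrow> 'a::euclidean_space set \<Rightarrow> ('a \<Rightarrow> real) \<Rightarrow> bool" where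
  "Ck_closure 0 U f \<longleftrightarrow> continuous_on (closure U) f"
| "Ck_closure (Suc k) U f \<longleftrightarrow> continuous_on (closure U) f \<and> (\<forall>x\<in>U. f differentiable (at x)) \<and>
     (\<forall>i\<in>Basis. \<exists>g. Ck_closure k U g \<and> (\<forall>x\<in>U. g x = frechet_derivative f (at x) i))"

definition grad :: "('a::euclidean_space \<Rightarrow> real) \<Rightarrow> 'a \<Rightarrow> 'a" where
  "grad f x = (\<Sum>i\<in>Basis. frechet_derivative f (at x) i *\<^sub>R i)"

text \<open>Gradient on the closure of U: value of the continuous extension of the gradient.\<close>
definition grad_cl :: "'a::euclidean_space set \<Rightarrow> ('a \<Rightarrow> real) \<Rightarrow> 'a \<Rightarrow> 'a" where
  "grad_cl U f x = (\<Sum>i\<in>Basis. Lim (at x within U) (\<lambda>z. frechet_derivative f (at z) i) *\<^sub>R i)"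

definition classD :: "real \<Rightarrow> nat \<Rightarrow> (nat \<Rightarrow> 'a::euclidean_space) \<Rightarrow> nat \<Rightarrow> ('a \<Rightarrow> real) set" where
  "classD \<zeta> N y \<beta> = {\<eta>. Ck_closure \<beta> (UU \<zeta> N y) \<eta> \<and>
     (\<forall>x\<in>UU \<zeta> N y. (norm (grad \<eta> x))\<^sup>2 = 2 * \<eta> x) \<and>
     (\<exists>\<delta>>0. \<forall>x\<in>frontier (UU \<zeta> N y). \<forall>n\<in>nvec \<zeta> N y x. grad_cl (UU \<zeta> N y) \<eta> x \<bullet> n > \<delta>)}"

definition abs_cont_on :: "real set \<Rightarrow> (real \<Rightarrow> 'a::real_normed_vector) \<Rightarrow> bool" where
  "abs_cont_on S \<alpha> \<longleftrightarrow> (\<forall>\<epsilon>>0. \<exists>\<delta>>0. \<forall>(n::nat) a b.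
      (\<forall>k<n. a k \<le> b k \<and> {a k..b k} \<subseteq> S) \<and>
      (\<forall>j<n. \<forall>k<n. j \<noteq> k \<longrightarrow> b j \<le> a k \<or> b k \<le> a j) \<and>
      (\<Sum>k<n. b k - a k) < \<delta> \<longrightarrow> (\<Sum>k<n. norm (\<alpha> (b k) - \<alpha> (a k))) < \<epsilon>)"

definition curve_length :: "(real \<Rightarrow> 'a::real_normed_vector) \<Rightarrow> ennreal" where
  "curve_length \<alpha> = (SUP p\<in>{(n, t). t 0 = 0 \<and> t n = 1 \<and> (\<forall>k<n. t k \<le> t (Suc k))}.
       ennreal (\<Sum>k<fst p. dist (\<alpha> (snd p (Suc k))) (\<alpha> (snd p k))))"

definition dist_U :: "'a::euclidean_space set \<Rightarrow> 'a \<Rightarrow> 'a set \<Rightarrow> ennreal" where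
  "dist_U U x M = (INF \<alpha>\<in>{\<alpha>. abs_cont_on {0..1} \<alpha> \<and> \<alpha> ` {0..1} \<subseteq> U \<and> \<alpha> 0 = x \<and> \<alpha> 1 \<in> M}.
       curve_length \<alpha>)"

end

theory Submission
  imports Defs
begin

(* Let G be the continuous extension of the gradient of eta to the closure of U. Then
   eta = |G|^2/2, and the claim becomes d_U(x, M) = |G(x)|.

   Lower bound: |G| = sqrt(2 eta) is 1-Lipschitz on convex subsets of U, because the gradient
   of sqrt(2 eta + e^2) has norm at most 1. Hence every curve from x to M, where G vanishes,
   has length at least |G(x)|.

   Upper bound: a step of length s in the direction -G/|G| lowers |G| by almost s, and the
   outward boundary condition keeps such steps inside U. Iterating until |G| is small and then
   jumping to the nearby compact zero set M gives Lipschitz paths from x to M of length close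
   to |G(x)|. *)

lemma sum_dist_le_curve_length:
  assumes "t 0 = 0" "t n = 1" "\<And>k. k < n \<Longrightarrow> t k \<le> t (Suc k)"
  shows "ennreal (\<Sum>k<n. dist (\<alpha> (t (Suc k))) (\<alpha> (t k))) \<le> curve_length \<alpha>"
  unfolding curve_length_def by (rule SUP_upper2[of "(n, t)"]) (use assms in auto)

lemma curve_length_le_lipschitz:
  assumes "L-lipschitz_on {0..1} \<alpha>"
  shows "curve_length \<alpha> \<le> ennreal L"
  unfolding curve_length_def
proof (rule SUP_least)
  fix p :: "nat \<times> (nat \<Rightarrow> real)"
  assume "p \<in> {(n, t). t 0 = 0 \<and> t n = 1 \<and> (\<forall>k<n. t k \<le> t (Suc k))}"
  then obtain n t where p: "p = (n, t)" and t: "t 0 = 0" "t n = 1" "\<forall>k<n. t k \<le> t (Suc k)"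
    by blast
  have mono: "t i \<le> t j" if "i \<le> j" "j \<le> n" for i j
    by (rule lift_Suc_mono_le_ivl[of "{..<n}"]) (use t that in auto)
  have "dist (\<alpha> (t (Suc k))) (\<alpha> (t k)) \<le> L * (t (Suc k) - t k)" if "k < n" for k
  proof -
    have "t (Suc k) \<in> {0..1}" "t k \<in> {0..1}"
      using mono[of 0 k] mono[of 0 "Suc k"] mono[of k n] mono[of "Suc k" n] t(1,2) that by auto
    then show ?thesis
      using lipschitz_onD[OF assms, of "t (Suc k)" "t k"] t(3) that by (simp add: dist_real_def)
  qed
  then have "(\<Sum>k<n. dist (\<alpha> (t (Suc k))) (\<alpha> (t k))) \<le> (\<Sum>k<n. L * (t (Suc k) - t k))"
    by (intro sum_mono) auto
  also have "\<dots> = L"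
    by (simp add: sum_distrib_left[symmetric] sum_lessThan_telescope t(1,2))
  finally show "ennreal (\<Sum>k<fst p. dist (\<alpha> (snd p (Suc k))) (\<alpha> (snd p k))) \<le> ennreal L"
    unfolding p by (simp add: ennreal_leI)
qed

lemma lipschitz_on_imp_abs_cont_on:
  assumes "L-lipschitz_on S \<alpha>"
  shows "abs_cont_on S \<alpha>"
  unfolding abs_cont_on_def
proof (intro allI impI)
  fix \<epsilon> :: real assume "\<epsilon> > 0"
  have L: "L \<ge> 0" using lipschitz_on_nonneg[OF assms] .
  have "(\<Sum>k<n. norm (\<alpha> (b k) - \<alpha> (a k))) < \<epsilon>"
    if ab: "\<forall>k<n. a k \<le> b k \<and> {a k..b k} \<subseteq> S" and small: "(\<Sum>k<n. b k - a k) < \<epsilon> / (L + 1)"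
    for n :: nat and a b :: "nat \<Rightarrow> real"
  proof -
    have "norm (\<alpha> (b k) - \<alpha> (a k)) \<le> L * (b k - a k)" if "k < n" for k
      using lipschitz_on_normD[OF assms, of "b k" "a k"] ab that by fastforce
    then have "(\<Sum>k<n. norm (\<alpha> (b k) - \<alpha> (a k))) \<le> (\<Sum>k<n. L * (b k - a k))"
      by (intro sum_mono) simp
    also have "\<dots> = L * (\<Sum>k<n. b k - a k)"
      by (simp add: sum_distrib_left)
    also have "\<dots> \<le> L * (\<epsilon> / (L + 1))"
      using small L by (intro mult_left_mono) auto
    also have "\<dots> < \<epsilon>"
      using \<open>\<epsilon> > 0\<close> L by (simp add: field_simps)
    finally show ?thesis .
  qed
  moreover have "\<epsilon> / (L + 1) > 0" using \<open>\<epsilon> > 0\<close> L by simp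
  ultimately show "\<exists>\<delta>>0. \<forall>(n::nat) a b. (\<forall>k<n. a k \<le> b k \<and> {a k..b k} \<subseteq> S) \<and>
      (\<forall>j<n. \<forall>k<n. j \<noteq> k \<longrightarrow> b j \<le> a k \<or> b k \<le> a j) \<and> (\<Sum>k<n. b k - a k) < \<delta> \<longrightarrow>
      (\<Sum>k<n. norm (\<alpha> (b k) - \<alpha> (a k))) < \<epsilon>"
    by blast
qed

lemma abs_cont_on_imp_continuous_on:
  assumes "abs_cont_on {a..b} \<alpha>"
  shows "continuous_on {a..b} \<alpha>"
  unfolding continuous_on_iff
proof (intro ballI allI impI)
  fix s e :: real assume s: "s \<in> {a..b}" and "e > 0"
  then obtain d where "d > 0" and d: "\<forall>(n::nat) l u. (\<forall>k<n. l k \<le> u k \<and> {l k..u k} \<subseteq> {a..b}) \<and>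
      (\<forall>j<n. \<forall>k<n. j \<noteq> k \<longrightarrow> u j \<le> l k \<or> u k \<le> l j) \<and> (\<Sum>k<n. u k - l k) < d \<longrightarrow>
      (\<Sum>k<n. norm (\<alpha> (u k) - \<alpha> (l k))) < e"
    using assms unfolding abs_cont_on_def by blast
  show "\<exists>d>0. \<forall>t\<in>{a..b}. dist t s < d \<longrightarrow> dist (\<alpha> t) (\<alpha> s) < e"
  proof (intro exI[of _ d] conjI ballI impI)
    fix t assume t: "t \<in> {a..b}" and "dist t s < d"
    have "norm (\<alpha> (max s t) - \<alpha> (min s t)) < e"
      using d[rule_format, of 1 "\<lambda>_. min s t" "\<lambda>_. max s t"] s t \<open>dist t s < d\<close>
      by (cases "s \<le> t") (auto simp: dist_real_def)
    then show "dist (\<alpha> t) (\<alpha> s) < e"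
      by (cases "s \<le> t") (auto simp: dist_norm norm_minus_commute)
  qed fact
qed

lemma uniform_partition_fine:
  fixes \<alpha> :: "real \<Rightarrow> 'a::metric_space"
  assumes "continuous_on {0..1} \<alpha>" "0 < e"
  obtains n :: nat where "0 < n" "\<And>k. k < n \<Longrightarrow> dist (\<alpha> (real (Suc k) / n)) (\<alpha> (real k / n)) < e"
proof -
  obtain d where "d > 0" and d: "\<And>s t. s \<in> {0..1} \<Longrightarrow> t \<in> {0..1} \<Longrightarrow> dist s t < d \<Longrightarrow> dist (\<alpha> s) (\<alpha> t) < e"
    using compact_uniformly_continuous[OF assms(1)] assms(2) unfolding uniformly_continuous_on_def by force
  obtain n :: nat where n: "1 / d < real n"
    using reals_Archimedean2 by blast
  moreover have "0 < 1 / d"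
    using \<open>d > 0\<close> by simp
  ultimately have "n > 0"
    by linarith
  then have "1 / real n < d"
    using n \<open>d > 0\<close> by (simp add: field_simps)
  show ?thesis
  proof (rule that[OF \<open>n > 0\<close>])
    fix k assume "k < n"
    then have "real (Suc k) / n \<in> {0..1}" "real k / n \<in> {0..1}"
      by (auto simp: field_simps)
    moreover have "dist (real (Suc k) / n) (real k / n) = 1 / real n"
      by (simp add: dist_real_def diff_divide_distrib[symmetric])
    ultimately show "dist (\<alpha> (real (Suc k) / n)) (\<alpha> (real k / n)) < e"
      using d \<open>1 / real n < d\<close> by simp
  qed
qed

lemma lipschitz_on_balls_le_curve_length:
  fixes \<alpha> :: "real \<Rightarrow> 'a::real_normed_vector" and f :: "'a \<Rightarrow> real"
  assumes "open U" and \<alpha>: "continuous_on {0..1} \<alpha>" "\<alpha> ` {0..1} \<subseteq> U"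
    and lip: "\<And>c e. ball c e \<subseteq> U \<Longrightarrow> 1-lipschitz_on (ball c e) f"
  shows "ennreal (f (\<alpha> 0) - f (\<alpha> 1)) \<le> curve_length \<alpha>"
proof -
  obtain e where "e > 0" and e: "(\<Union>z\<in>\<alpha> ` {0..1}. ball z e) \<subseteq> U"
    using compact_subset_open_imp_ball_epsilon_subset[OF compact_continuous_image[OF \<alpha>(1) compact_Icc]
        \<open>open U\<close> \<alpha>(2)] by blast
  obtain n :: nat where "0 < n" and n: "\<And>k. k < n \<Longrightarrow> dist (\<alpha> (real (Suc k) / n)) (\<alpha> (real k / n)) < e"
    using uniform_partition_fine[OF \<alpha>(1) \<open>e > 0\<close>] by blast
  define t where "t k = real k / real n" for k
  have step: "f (\<alpha> (t k)) - f (\<alpha> (t (Suc k))) \<le> dist (\<alpha> (t (Suc k))) (\<alpha> (t k))" if "k < n" for k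
  proof -
    have "t k \<in> {0..1}"
      using that by (auto simp: t_def field_simps)
    then have "ball (\<alpha> (t k)) e \<subseteq> U"
      using e by blast
    moreover have "\<alpha> (t (Suc k)) \<in> ball (\<alpha> (t k)) e" "\<alpha> (t k) \<in> ball (\<alpha> (t k)) e"
      using n[OF that] \<open>e > 0\<close> by (simp_all add: t_def dist_commute)
    ultimately show ?thesis
      using lipschitz_onD[OF lip] by (fastforce simp: dist_real_def dist_commute)
  qed
  have "f (\<alpha> 0) - f (\<alpha> 1) = (\<Sum>k<n. f (\<alpha> (t k)) - f (\<alpha> (t (Suc k))))"
    using sum_lessThan_telescope'[of "\<lambda>k. f (\<alpha> (t k))" n] \<open>n > 0\<close> by (simp add: t_def)
  also have "\<dots> \<le> (\<Sum>k<n. dist (\<alpha> (t (Suc k))) (\<alpha> (t k)))"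
    by (intro sum_mono step) simp
  finally have "ennreal (f (\<alpha> 0) - f (\<alpha> 1)) \<le> ennreal (\<Sum>k<n. dist (\<alpha> (t (Suc k))) (\<alpha> (t k)))"
    by (rule ennreal_leI)
  also have "\<dots> \<le> curve_length \<alpha>"
    using \<open>n > 0\<close> by (intro sum_dist_le_curve_length) (auto simp: t_def divide_right_mono)
  finally show ?thesis .
qed

definition lipschitz_reachable :: "'a::real_normed_vector set \<Rightarrow> real \<Rightarrow> 'a \<Rightarrow> 'a \<Rightarrow> bool" where
  "lipschitz_reachable U L x w \<longleftrightarrow>
     (\<exists>\<alpha>. L-lipschitz_on {0..1::real} \<alpha> \<and> \<alpha> 0 = x \<and> \<alpha> 1 = w \<and> \<alpha> ` {0..1} \<subseteq> U)"

lemma lipschitz_reachable_refl: "x \<in> U \<Longrightarrow> lipschitz_reachable U 0 x x"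
  unfolding lipschitz_reachable_def by (intro exI[of _ "\<lambda>_. x"]) (auto intro: lipschitz_on_constant)

lemma lipschitz_reachable_imp_mem: "lipschitz_reachable U L x w \<Longrightarrow> w \<in> U"
  unfolding lipschitz_reachable_def by auto

lemma lipschitz_reachable_mono:
  "lipschitz_reachable U L x w \<Longrightarrow> L \<le> L' \<Longrightarrow> lipschitz_reachable U L' x w"
  unfolding lipschitz_reachable_def using lipschitz_on_le by blast

lemma lipschitz_reachable_segment:
  assumes "closed_segment w w' \<subseteq> U"
  shows "lipschitz_reachable U (dist w w') w w'"
  unfolding lipschitz_reachable_def
proof (intro exI[of _ "linepath w w'"] conjI)
  have "dist (linepath w w' s) (linepath w w' t) = dist w w' * dist s t" for s t
  proof -
    have "linepath w w' s - linepath w w' t = (s - t) *\<^sub>R (w' - w)"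
      by (simp add: linepath_def algebra_simps)
    then show ?thesis
      by (simp add: dist_norm dist_real_def norm_minus_commute)
  qed
  then show "(dist w w')-lipschitz_on {0..1} (linepath w w')"
    by (intro lipschitz_onI) auto
  show "linepath w w' ` {0..1} \<subseteq> U"
    using assms path_image_linepath unfolding path_image_def by blast
qed (simp_all add: linepath_def)

lemma lipschitz_on_affine_reparam:
  fixes \<alpha> :: "real \<Rightarrow> 'a::metric_space"
  assumes "L-lipschitz_on {0..1} \<alpha>" "a < b"
  shows "(L / (b - a))-lipschitz_on {a..b} (\<lambda>t. \<alpha> ((t - a) / (b - a)))"
proof -
  have "(1 / (b - a))-lipschitz_on {a..b} (\<lambda>t. (t - a) / (b - a))"
    using \<open>a < b\<close> by (intro lipschitz_onI) (auto simp: dist_real_def diff_divide_distrib[symmetric] abs_divide)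
  moreover have "(\<lambda>t. (t - a) / (b - a)) ` {a..b} \<subseteq> {0..1}"
    using \<open>a < b\<close> by (auto simp: field_simps)
  then have "L-lipschitz_on ((\<lambda>t. (t - a) / (b - a)) ` {a..b}) \<alpha>"
    using assms(1) by (rule lipschitz_on_subset[rotated])
  ultimately show ?thesis
    using lipschitz_on_compose2 by fastforce
qed

(* Unlike joinpaths, which switches at 1/2, the switch point p can be chosen proportional to
   the Lipschitz constants, so that these add up. *)
definition path_join_at :: "real \<Rightarrow> (real \<Rightarrow> 'a) \<Rightarrow> (real \<Rightarrow> 'a) \<Rightarrow> real \<Rightarrow> 'a" where
  "path_join_at p \<alpha> \<beta> t = (if t \<le> p then \<alpha> (t / p) else \<beta> ((t - p) / (1 - p)))"

lemma path_join_at_endpoints: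
  assumes "0 < p" "p < 1"
  shows "path_join_at p \<alpha> \<beta> 0 = \<alpha> 0" "path_join_at p \<alpha> \<beta> 1 = \<beta> 1"
  using assms by (simp_all add: path_join_at_def)

lemma path_join_at_image:
  assumes "0 < p" "p < 1"
  shows "path_join_at p \<alpha> \<beta> ` {0..1} \<subseteq> \<alpha> ` {0..1} \<union> \<beta> ` {0..1}"
proof clarify
  fix t :: real assume t: "t \<in> {0..1}" "path_join_at p \<alpha> \<beta> t \<notin> \<beta> ` {0..1}"
  show "path_join_at p \<alpha> \<beta> t \<in> \<alpha> ` {0..1}"
  proof (cases "t \<le> p")
    case True
    then show ?thesis
      using assms t(1) by (auto simp: path_join_at_def field_simps)
  next
    case False
    then have "(t - p) / (1 - p) \<in> {0..1}"
      using assms t(1) by (auto simp: field_simps)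
    then show ?thesis
      using t(2) False by (auto simp: path_join_at_def)
  qed
qed

lemma lipschitz_on_path_join_at:
  fixes \<alpha> \<beta> :: "real \<Rightarrow> 'a::metric_space"
  assumes \<alpha>: "L1-lipschitz_on {0..1} \<alpha>" and \<beta>: "L2-lipschitz_on {0..1} \<beta>"
    and "\<alpha> 1 = \<beta> 0" "0 < L1" "0 < L2"
  shows "(L1 + L2)-lipschitz_on {0..1} (path_join_at (L1 / (L1 + L2)) \<alpha> \<beta>)"
  unfolding path_join_at_def
proof (rule lipschitz_on_concat)
  define p where "p = L1 / (L1 + L2)"
  have p: "0 < p" "p < 1" "L1 / p = L1 + L2" "L2 / (1 - p) = L1 + L2"
    using \<open>0 < L1\<close> \<open>0 < L2\<close> by (auto simp: p_def field_simps)
  show "(L1 + L2)-lipschitz_on {0..L1 / (L1 + L2)} (\<lambda>t. \<alpha> (t / (L1 / (L1 + L2))))"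
    using lipschitz_on_affine_reparam[OF \<alpha> \<open>0 < p\<close>] p by (simp add: p_def)
  show "(L1 + L2)-lipschitz_on {L1 / (L1 + L2)..1}
      (\<lambda>t. \<beta> ((t - L1 / (L1 + L2)) / (1 - L1 / (L1 + L2))))"
    using lipschitz_on_affine_reparam[OF \<beta> \<open>p < 1\<close>] p by (simp add: p_def)
  show "\<alpha> (L1 / (L1 + L2) / (L1 / (L1 + L2))) = \<beta> ((L1 / (L1 + L2) - L1 / (L1 + L2)) / (1 - L1 / (L1 + L2)))"
    using \<open>0 < L1\<close> \<open>0 < L2\<close> \<open>\<alpha> 1 = \<beta> 0\<close> by simp
qed

lemma lipschitz_reachable_trans:
  assumes "lipschitz_reachable U L1 x w" "lipschitz_reachable U L2 w z"
  shows "lipschitz_reachable U (L1 + L2) x z"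
proof -
  obtain \<alpha> :: "real \<Rightarrow> 'a" where \<alpha>: "L1-lipschitz_on {0..1} \<alpha>" "\<alpha> 0 = x" "\<alpha> 1 = w" "\<alpha> ` {0..1} \<subseteq> U"
    using assms(1) unfolding lipschitz_reachable_def by blast
  obtain \<beta> :: "real \<Rightarrow> 'a" where \<beta>: "L2-lipschitz_on {0..1} \<beta>" "\<beta> 0 = w" "\<beta> 1 = z" "\<beta> ` {0..1} \<subseteq> U"
    using assms(2) unfolding lipschitz_reachable_def by blast
  consider "L1 = 0" | "L2 = 0" | "0 < L1" "0 < L2"
    using lipschitz_on_nonneg[OF \<alpha>(1)] lipschitz_on_nonneg[OF \<beta>(1)] by linarith
  then show ?thesis
  proof cases
    case 1
    then have "x = w"
      using lipschitz_onD[OF \<alpha>(1), of 0 1] \<alpha>(2,3) by simp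
    then show ?thesis
      using assms(2) 1 by simp
  next
    case 2
    then have "w = z"
      using lipschitz_onD[OF \<beta>(1), of 0 1] \<beta>(2,3) by simp
    then show ?thesis
      using assms(1) 2 by simp
  next
    case 3
    define p where "p = L1 / (L1 + L2)"
    have p: "0 < p" "p < 1"
      using 3 by (auto simp: p_def field_simps)
    show ?thesis
      unfolding lipschitz_reachable_def
    proof (intro exI conjI)
      show "(L1 + L2)-lipschitz_on {0..1} (path_join_at p \<alpha> \<beta>)"
        unfolding p_def using lipschitz_on_path_join_at[OF \<alpha>(1) \<beta>(1)] \<alpha>(3) \<beta>(2) 3 by simp
      show "path_join_at p \<alpha> \<beta> ` {0..1} \<subseteq> U"
        using path_join_at_image[OF p, of \<alpha> \<beta>] \<alpha>(4) \<beta>(4) by blast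
    qed (simp_all add: path_join_at_endpoints[OF p] \<alpha>(2) \<beta>(3))
  qed
qed

lemma dist_U_le_lipschitz_reachable:
  assumes "lipschitz_reachable U L x m" "m \<in> M"
  shows "dist_U U x M \<le> ennreal L"
proof -
  obtain \<alpha> :: "real \<Rightarrow> 'a" where \<alpha>: "L-lipschitz_on {0..1} \<alpha>" "\<alpha> 0 = x" "\<alpha> 1 = m" "\<alpha> ` {0..1} \<subseteq> U"
    using assms(1) unfolding lipschitz_reachable_def by blast
  then have "dist_U U x M \<le> curve_length \<alpha>"
    unfolding dist_U_def using assms(2) lipschitz_on_imp_abs_cont_on by (intro INF_lower) auto
  also have "\<dots> \<le> ennreal L"
    by (rule curve_length_le_lipschitz[OF \<alpha>(1)])
  finally show ?thesis .
qed

lemma descent_steps: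
  fixes g :: "'a::real_normed_vector \<Rightarrow> real"
  assumes "x \<in> U" "0 < s"
    and step: "\<And>w. w \<in> U \<Longrightarrow> c \<le> g w \<Longrightarrow>
      \<exists>w'. closed_segment w w' \<subseteq> U \<and> dist w w' = s \<and> g w' \<le> g w - \<theta> * s"
  shows "\<exists>w L. lipschitz_reachable U L x w \<and> \<theta> * L \<le> g x - g w \<and> (g w < c \<or> real k * s \<le> L)"
proof (induction k)
  case 0
  show ?case
    using lipschitz_reachable_refl[OF \<open>x \<in> U\<close>] \<open>0 < s\<close> by force
next
  case (Suc k)
  then obtain w L where wL: "lipschitz_reachable U L x w" "\<theta> * L \<le> g x - g w" "g w < c \<or> real k * s \<le> L"
    by blast
  show ?case
  proof (cases "g w < c")
    case True
    then show ?thesis using wL by blast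
  next
    case False
    then obtain w' where w': "closed_segment w w' \<subseteq> U" "dist w w' = s" "g w' \<le> g w - \<theta> * s"
      using step lipschitz_reachable_imp_mem[OF wL(1)] by force
    have "lipschitz_reachable U (L + s) x w'"
      using lipschitz_reachable_trans[OF wL(1) lipschitz_reachable_segment[OF w'(1)]] w'(2) by simp
    moreover have "\<theta> * (L + s) \<le> g x - g w'" and "real (Suc k) * s \<le> L + s"
      using wL(2,3) w'(3) False by (auto simp: algebra_simps)
    ultimately show ?thesis by blast
  qed
qed

lemma descent_reaches_sublevel:
  fixes g :: "'a::real_normed_vector \<Rightarrow> real"
  assumes "x \<in> U" "0 < s" "0 < \<theta>" "\<And>w. w \<in> U \<Longrightarrow> 0 \<le> g w"
    and step: "\<And>w. w \<in> U \<Longrightarrow> c \<le> g w \<Longrightarrow>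
      \<exists>w'. closed_segment w w' \<subseteq> U \<and> dist w w' = s \<and> g w' \<le> g w - \<theta> * s"
  shows "\<exists>w L. lipschitz_reachable U L x w \<and> g w < c \<and> \<theta> * L \<le> g x - g w"
proof -
  obtain k :: nat where k: "g x / (\<theta> * s) < real k"
    using reals_Archimedean2 by blast
  obtain w L where wL: "lipschitz_reachable U L x w" "\<theta> * L \<le> g x - g w" "g w < c \<or> real k * s \<le> L"
    using descent_steps[OF assms(1,2) step] by blast
  have "g w < c"
  proof (rule ccontr)
    assume "\<not> g w < c"
    then have "\<theta> * (real k * s) \<le> \<theta> * L"
      using wL(3) \<open>0 < \<theta>\<close> by simp
    moreover have "g x < \<theta> * (real k * s)"
      using k \<open>0 < \<theta>\<close> \<open>0 < s\<close> by (simp add: field_simps)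
    ultimately show False
      using wL(2) assms(4)[OF lipschitz_reachable_imp_mem[OF wL(1)]] by linarith
  qed
  then show ?thesis
    using wL by blast
qed

lemma compact_continuous_uniform_gap:
  fixes f :: "'a::topological_space \<Rightarrow> real"
  assumes "compact K" "continuous_on K f" "\<And>x. x \<in> K \<Longrightarrow> f x < b"
  shows "\<exists>\<rho>>0. \<forall>x\<in>K. f x \<le> b - \<rho>"
proof (cases "K = {}")
  case True
  then show ?thesis by (intro exI[of _ 1]) auto
next
  case False
  then obtain x0 where "x0 \<in> K" "\<forall>x\<in>K. f x \<le> f x0"
    using continuous_attains_sup[OF assms(1) False assms(2)] by blast
  then show ?thesis
    using assms(3)[OF \<open>x0 \<in> K\<close>] by (intro exI[of _ "b - f x0"]) auto
qed

lemma compact_small_values_near_zeros: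
  fixes f :: "'a::metric_space \<Rightarrow> real"
  assumes "compact K" "continuous_on K f" "0 < e"
  shows "\<exists>c>0. \<forall>w\<in>K. \<bar>f w\<bar> < c \<longrightarrow> (\<exists>m\<in>K. f m = 0 \<and> dist w m < e)"
proof -
  define C where "C = K \<inter> (\<Inter>m\<in>{m\<in>K. f m = 0}. - ball m e)"
  have "compact C"
    unfolding C_def using assms(1) by (intro compact_Int_closed closed_INT) auto
  moreover have "continuous_on C (\<lambda>w. - \<bar>f w\<bar>)"
    by (rule continuous_on_subset[of K]) (auto intro!: continuous_on_minus continuous_on_rabs assms(2) simp: C_def)
  moreover have "- \<bar>f w\<bar> < 0" if "w \<in> C" for w
    using that \<open>0 < e\<close> by (auto simp: C_def)
  ultimately obtain c where "c > 0" "\<forall>w\<in>C. - \<bar>f w\<bar> \<le> 0 - c"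
    by (metis compact_continuous_uniform_gap)
  then show ?thesis
    by (intro exI[of _ c]) (force simp: C_def dist_commute)
qed

lemma ratio_close_to_one:
  fixes g e :: real
  assumes "0 \<le> g" "0 < e"
  obtains \<theta> where "0 < \<theta>" "\<theta> < 1" "g / \<theta> \<le> g + e"
proof (rule that[of "(g + 1) / (g + 1 + e)"])
  show "0 < (g + 1) / (g + 1 + e)" "(g + 1) / (g + 1 + e) < 1"
    using assms by (auto simp: field_simps)
  have "g / ((g + 1) / (g + 1 + e)) = g + g / (g + 1) * e"
    using assms(1) by (simp add: field_simps)
  also have "\<dots> \<le> g + e"
    using assms by (intro add_left_mono mult_left_le_one_le) auto
  finally show "g / ((g + 1) / (g + 1 + e)) \<le> g + e" .
qed

lemma closed_segment_ray_subset:
  fixes w v :: "'a::real_vector"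
  assumes "0 \<le> s" "\<And>\<tau>. 0 \<le> \<tau> \<Longrightarrow> \<tau> \<le> s \<Longrightarrow> w - \<tau> *\<^sub>R v \<in> U"
  shows "closed_segment w (w - s *\<^sub>R v) \<subseteq> U"
proof
  fix z assume "z \<in> closed_segment w (w - s *\<^sub>R v)"
  then obtain u where u: "0 \<le> u" "u \<le> 1" "z = w - (u * s) *\<^sub>R v"
    by (auto simp: in_segment algebra_simps)
  moreover have "u * s \<le> s"
    using u assms(1) mult_left_le_one_le[of s u] by linarith
  ultimately show "z \<in> U"
    using assms by simp
qed

lemma small_step_in_ball:
  fixes w y v :: "'a::real_normed_vector"
  assumes "norm (w - y) \<le> r - \<rho>" "norm v = 1" "0 \<le> \<tau>" "\<tau> < \<rho>"
  shows "w - \<tau> *\<^sub>R v \<in> ball y r"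
proof -
  have "norm ((w - y) - \<tau> *\<^sub>R v) \<le> norm (w - y) + norm (\<tau> *\<^sub>R v)"
    by (rule norm_triangle_ineq4)
  also have "\<dots> < r"
    using assms by simp
  finally show ?thesis
    by (simp add: dist_norm norm_minus_commute algebra_simps)
qed

lemma inward_step_in_ball:
  fixes w y \<nu> :: "'a::real_inner"
  assumes "w \<in> ball y r" "norm \<nu> = 1" "\<kappa> \<le> \<nu> \<bullet> (w - y)" "0 \<le> \<tau>" "\<tau> \<le> 2 * \<kappa>"
  shows "w - \<tau> *\<^sub>R \<nu> \<in> ball y r"
proof -
  have "dist y w < r"
    using assms(1) by simp
  then have "0 \<le> r"
    using zero_le_dist[of y w] by linarith
  have "2 * ((w - y) \<bullet> (\<tau> *\<^sub>R \<nu>)) = (norm (w - y))\<^sup>2 + (norm (\<tau> *\<^sub>R \<nu>))\<^sup>2 - (norm ((w - y) - \<tau> *\<^sub>R \<nu>))\<^sup>2"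
    using dot_norm_neg[of "w - y" "\<tau> *\<^sub>R \<nu>"] by simp
  then have "(norm ((w - y) - \<tau> *\<^sub>R \<nu>))\<^sup>2 = (norm (w - y))\<^sup>2 - 2 * \<tau> * (\<nu> \<bullet> (w - y)) + \<tau>\<^sup>2"
    using assms(2) by (simp add: inner_commute power_mult_distrib)
  also have "\<dots> \<le> (norm (w - y))\<^sup>2 - \<tau> * (2 * \<kappa> - \<tau>)"
    using mult_left_mono[OF assms(3,4)] by (simp add: power2_eq_square algebra_simps)
  also have "\<dots> \<le> (norm (w - y))\<^sup>2"
    using assms(4,5) by simp
  also have "\<dots> < r\<^sup>2"
    using assms(1) by (simp add: dist_norm norm_minus_commute power_strict_mono)
  finally have "norm ((w - y) - \<tau> *\<^sub>R \<nu>) < r"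
    using \<open>0 \<le> r\<close> by (rule power2_less_imp_less)
  then show ?thesis
    by (simp add: dist_norm norm_minus_commute algebra_simps)
qed

locale eikonal =
  fixes U :: "'a::real_inner set" and \<eta> :: "'a \<Rightarrow> real" and G :: "'a \<Rightarrow> 'a"
  assumes open_U: "open U"
    and has_derivative_eta: "\<And>z. z \<in> U \<Longrightarrow> (\<eta> has_derivative (\<lambda>v. G z \<bullet> v)) (at z)"
    and eikonal_eq: "\<And>z. z \<in> U \<Longrightarrow> (norm (G z))\<^sup>2 = 2 * \<eta> z"
begin

lemma norm_grad_eq_sqrt: "z \<in> U \<Longrightarrow> norm (G z) = sqrt (2 * \<eta> z)"
  by (metis eikonal_eq norm_ge_zero real_sqrt_unique)

lemma eta_nonneg: "z \<in> U \<Longrightarrow> 0 \<le> \<eta> z"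
  using eikonal_eq[of z] zero_le_power2[of "norm (G z)"] by linarith

lemma norm_grad_le_regularized_sqrt: "z \<in> U \<Longrightarrow> norm (G z) \<le> sqrt (2 * \<eta> z + e\<^sup>2)"
  by (rule real_le_rsqrt) (simp add: eikonal_eq)

lemma regularized_sqrt_lipschitz_on_convex:
  assumes "convex S" "S \<subseteq> U" "0 < e"
  shows "1-lipschitz_on S (\<lambda>z. sqrt (2 * \<eta> z + e\<^sup>2))"
proof -
  define \<psi> where "\<psi> = (\<lambda>z. sqrt (2 * \<eta> z + e\<^sup>2))"
  have norm_le_psi: "norm (G z) \<le> \<psi> z" and psi_pos: "0 < \<psi> z" if "z \<in> U" for z
    using norm_grad_le_regularized_sqrt[OF that] eta_nonneg[OF that] \<open>0 < e\<close>
    by (simp_all add: \<psi>_def add_nonneg_pos)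
  have deriv: "(\<psi> has_derivative (\<lambda>v. (G z \<bullet> v) * inverse (\<psi> z))) (at z within S)" if "z \<in> S" for z
  proof -
    have "z \<in> U" using that assms by auto
    have "((\<lambda>z. 2 * \<eta> z + e\<^sup>2) has_derivative (\<lambda>v. 2 * (G z \<bullet> v))) (at z within S)"
      using has_derivative_at_withinI[OF has_derivative_eta[OF \<open>z \<in> U\<close>]]
      by (intro has_derivative_add_const has_derivative_mult_right)
    from DERIV_compose_FDERIV[OF DERIV_real_sqrt this] psi_pos[OF \<open>z \<in> U\<close>]
    show ?thesis
      by (simp add: \<psi>_def)
  qed
  have onorm: "onorm (\<lambda>v. (G z \<bullet> v) * inverse (\<psi> z)) \<le> 1" if "z \<in> S" for z
  proof (rule onorm_bound)
    fix v
    have "z \<in> U" using that assms by auto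
    have "\<bar>G z \<bullet> v\<bar> \<le> norm (G z) * norm v"
      by (rule Cauchy_Schwarz_ineq2)
    also have "\<dots> \<le> \<psi> z * norm v"
      by (rule mult_right_mono[OF norm_le_psi[OF \<open>z \<in> U\<close>] norm_ge_zero])
    finally show "norm ((G z \<bullet> v) * inverse (\<psi> z)) \<le> 1 * norm v"
      using psi_pos[OF \<open>z \<in> U\<close>] by (simp add: abs_mult field_simps)
  qed simp
  show ?thesis
    unfolding \<psi>_def[symmetric]
  proof (rule lipschitz_onI)
    fix a b assume "a \<in> S" "b \<in> S"
    then show "dist (\<psi> a) (\<psi> b) \<le> 1 * dist a b"
      using differentiable_bound[OF \<open>convex S\<close> deriv onorm] by (simp add: dist_norm)
  qed simp
qed

lemma norm_grad_lipschitz_on_convex: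
  assumes "convex S" "S \<subseteq> U"
  shows "1-lipschitz_on S (\<lambda>z. norm (G z))"
proof -
  have le: "norm (G a) \<le> norm (G b) + dist a b" if "a \<in> S" "b \<in> S" for a b
  proof (rule field_le_epsilon)
    fix e :: real assume "e > 0"
    have "a \<in> U" "b \<in> U"
      using that assms by auto
    have "norm (G a) \<le> sqrt (2 * \<eta> a + e\<^sup>2)"
      by (rule norm_grad_le_regularized_sqrt[OF \<open>a \<in> U\<close>])
    also have "\<dots> \<le> sqrt (2 * \<eta> b + e\<^sup>2) + dist a b"
      using lipschitz_onD[OF regularized_sqrt_lipschitz_on_convex[OF assms \<open>0 < e\<close>] that]
      by (simp add: dist_real_def)
    also have "sqrt (2 * \<eta> b + e\<^sup>2) \<le> sqrt (2 * \<eta> b) + sqrt (e\<^sup>2)"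
      using eta_nonneg[OF \<open>b \<in> U\<close>] by (intro sqrt_add_le_add_sqrt) auto
    finally show "norm (G a) \<le> norm (G b) + dist a b + e"
      using norm_grad_eq_sqrt[OF \<open>b \<in> U\<close>] \<open>0 < e\<close> by simp
  qed
  show ?thesis
  proof (rule lipschitz_onI)
    fix a b assume "a \<in> S" "b \<in> S"
    then show "dist (norm (G a)) (norm (G b)) \<le> 1 * dist a b"
      using le[of a b] le[of b a] by (auto simp: dist_real_def dist_commute abs_le_iff)
  qed simp
qed

lemma norm_grad_le_curve_length:
  assumes "continuous_on {0..1} \<alpha>" "\<alpha> ` {0..1} \<subseteq> U" "\<eta> (\<alpha> 1) = 0"
  shows "ennreal (norm (G (\<alpha> 0))) \<le> curve_length \<alpha>"
proof -
  have "ennreal (norm (G (\<alpha> 0)) - norm (G (\<alpha> 1))) \<le> curve_length \<alpha>"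
    by (rule lipschitz_on_balls_le_curve_length[OF open_U assms(1,2)])
      (simp add: norm_grad_lipschitz_on_convex)
  moreover have "\<alpha> 1 \<in> U"
    using assms(2) by auto
  then have "G (\<alpha> 1) = 0"
    using assms(3) norm_grad_eq_sqrt[OF \<open>\<alpha> 1 \<in> U\<close>] by simp
  ultimately show ?thesis
    by simp
qed

lemma eta_le_linearization:
  assumes seg: "closed_segment a b \<subseteq> U"
    and B: "\<And>z. z \<in> closed_segment a b \<Longrightarrow> norm (G z - G a) \<le> B"
  shows "\<eta> b \<le> \<eta> a + G a \<bullet> (b - a) + B * norm (b - a)"
proof -
  have "norm (\<eta> b - \<eta> a - G a \<bullet> (b - a)) \<le> norm (b - a) * B"
  proof (rule differentiable_bound_linearization[where S = "closed_segment a b" and f' = "\<lambda>z v. G z \<bullet> v"])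
    show "a + t *\<^sub>R (b - a) \<in> closed_segment a b" if "t \<in> {0..1}" for t
    proof -
      have "a + t *\<^sub>R (b - a) = (1 - t) *\<^sub>R a + t *\<^sub>R b"
        by (simp add: algebra_simps)
      then show ?thesis
        using that by (auto simp: in_segment)
    qed
    show "(\<eta> has_derivative (\<lambda>v. G z \<bullet> v)) (at z within closed_segment a b)"
      if "z \<in> closed_segment a b" for z
      using seg that has_derivative_eta has_derivative_at_withinI by blast
    show "onorm ((\<lambda>v. G z \<bullet> v) - (\<lambda>v. G a \<bullet> v)) \<le> B" if "z \<in> closed_segment a b" for z
    proof -
      have "(\<lambda>v. G z \<bullet> v) - (\<lambda>v. G a \<bullet> v) = (\<lambda>v. (G z - G a) \<bullet> v)"
        by (auto simp: fun_eq_iff inner_diff_left)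
      moreover have "onorm (\<lambda>v. (G z - G a) \<bullet> v) \<le> B"
      proof (rule onorm_bound)
        show "0 \<le> B"
          using B[of a] norm_ge_zero[of "G a - G a"] by simp
        show "norm ((G z - G a) \<bullet> v) \<le> B * norm v" for v
          using Cauchy_Schwarz_ineq2[of "G z - G a" v] mult_right_mono[OF B[OF that] norm_ge_zero[of v]]
          by simp
      qed
      ultimately show ?thesis
        by simp
    qed
  qed simp
  then show ?thesis
    by (simp add: abs_le_iff mult.commute)
qed

lemma norm_grad_descent:
  assumes seg: "closed_segment w w' \<subseteq> U" and w': "w' = w - s *\<^sub>R sgn (G w)"
    and "G w \<noteq> 0" "0 \<le> s" "\<theta> * s \<le> norm (G w)"
    and close: "\<And>z. z \<in> closed_segment w w' \<Longrightarrow> norm (G z - G w) \<le> (1 - \<theta>) * norm (G w)"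
  shows "norm (G w') \<le> norm (G w) - \<theta> * s"
proof -
  have \<nu>: "norm (sgn (G w)) = 1" "G w \<bullet> sgn (G w) = norm (G w)"
    using \<open>G w \<noteq> 0\<close> by (simp_all add: norm_sgn sgn_div_norm dot_square_norm power2_eq_square)
  have "w \<in> U" "w' \<in> U"
    using seg by auto
  have "\<eta> w' \<le> \<eta> w + G w \<bullet> (w' - w) + (1 - \<theta>) * norm (G w) * norm (w' - w)"
    by (rule eta_le_linearization[OF seg close])
  also have "\<dots> = \<eta> w - \<theta> * s * norm (G w)"
    using \<nu> \<open>0 \<le> s\<close> by (simp add: w' algebra_simps)
  finally have "\<eta> w' \<le> \<eta> w - \<theta> * s * norm (G w)" .
  moreover have "(norm (G w) - \<theta> * s)\<^sup>2 = (norm (G w))\<^sup>2 - 2 * (\<theta> * s * norm (G w)) + (\<theta> * s)\<^sup>2"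
    by (simp add: power2_diff algebra_simps)
  ultimately have "(norm (G w'))\<^sup>2 \<le> (norm (G w) - \<theta> * s)\<^sup>2"
    using eikonal_eq[OF \<open>w \<in> U\<close>] eikonal_eq[OF \<open>w' \<in> U\<close>] zero_le_power2[of "\<theta> * s"] by linarith
  then show ?thesis
    by (rule power2_le_imp_le) (use assms(5) in linarith)
qed

end

locale eikonal_balls = eikonal U \<eta> G for U :: "'a::euclidean_space set" and \<eta> G +
  fixes r :: real and N :: nat and y :: "nat \<Rightarrow> 'a" and \<delta> :: real
  assumes r_pos: "0 < r"
    and U_eq: "U = (\<Union>i\<in>{1..N}. ball (y i) r)"
    and continuous_eta: "continuous_on (closure U) \<eta>"
    and continuous_G: "continuous_on (closure U) G"
    and delta_pos: "0 < \<delta>"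
    and boundary_outward: "\<And>z i. z \<in> frontier U \<Longrightarrow> i \<in> {1..N} \<Longrightarrow> norm (z - y i) = r \<Longrightarrow> \<delta> < G z \<bullet> (z - y i)"
begin

lemma closure_U_eq: "closure U = (\<Union>i\<in>{1..N}. cball (y i) r)"
proof
  show "closure U \<subseteq> (\<Union>i\<in>{1..N}. cball (y i) r)"
    by (rule closure_minimal) (auto simp: U_eq closed_UN)
  have "cball (y i) r \<subseteq> closure U" if "i \<in> {1..N}" for i
  proof -
    have "ball (y i) r \<subseteq> U"
      using that by (auto simp: U_eq)
    then have "closure (ball (y i) r) \<subseteq> closure U"
      by (rule closure_mono)
    then show ?thesis
      using r_pos by simp
  qed
  then show "(\<Union>i\<in>{1..N}. cball (y i) r) \<subseteq> closure U"
    by blast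
qed

lemma compact_closure_U: "compact (closure U)"
  unfolding closure_U_eq by (intro compact_UN) auto

lemma eikonal_eq_closure:
  assumes "z \<in> closure U"
  shows "(norm (G z))\<^sup>2 = 2 * \<eta> z"
proof -
  have "continuous_on (closure U) (\<lambda>z. (norm (G z))\<^sup>2 - 2 * \<eta> z)"
    by (intro continuous_on_diff continuous_on_power continuous_on_norm continuous_on_mult
        continuous_on_const continuous_G continuous_eta)
  then have "(\<lambda>z. (norm (G z))\<^sup>2 - 2 * \<eta> z) z = 0"
    by (rule continuous_constant_on_closure[OF _ _ assms]) (simp add: eikonal_eq)
  then show ?thesis
    by simp
qed

lemma frontier_U_sphere:
  assumes "z \<in> frontier U"
  obtains i where "i \<in> {1..N}" "norm (z - y i) = r"
proof -
  obtain i where i: "i \<in> {1..N}" "dist (y i) z \<le> r"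
    using assms closure_U_eq by (auto simp: frontier_def)
  moreover have "z \<notin> ball (y i) r"
    using assms i(1) open_U by (auto simp: frontier_def interior_open U_eq)
  ultimately show thesis
    using that by (auto simp: dist_norm norm_minus_commute)
qed

lemma eta_pos_frontier: "z \<in> frontier U \<Longrightarrow> 0 < \<eta> z"
proof -
  assume z: "z \<in> frontier U"
  then obtain i where i: "i \<in> {1..N}" "norm (z - y i) = r"
    by (rule frontier_U_sphere)
  then have "G z \<noteq> 0"
    using boundary_outward[OF z i] delta_pos by auto
  then have "0 < (norm (G z))\<^sup>2"
    by simp
  moreover have "z \<in> closure U"
    using z by (simp add: frontier_def)
  ultimately show ?thesis
    using eikonal_eq_closure[of z] by linarith
qed

lemma zero_set_subset_U: "{z \<in> closure U. \<eta> z = 0} \<subseteq> U"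
proof
  fix z assume "z \<in> {z \<in> closure U. \<eta> z = 0}"
  then have "z \<in> closure U" "z \<notin> frontier U"
    using eta_pos_frontier[of z] by auto
  then show "z \<in> U"
    using open_U by (auto simp: frontier_def interior_open)
qed

lemma compact_zero_set: "compact {z \<in> closure U. \<eta> z = 0}"
proof -
  have "closed {z \<in> closure U. \<eta> z = 0}"
    by (rule continuous_closed_preimage_constant[OF continuous_eta closed_closure])
  then show ?thesis
    using compact_Int_closed[OF compact_closure_U] by (metis (no_types, lifting) inf.absorb2 mem_Collect_eq subsetI)
qed

lemma zero_set_near_small_gradient:
  assumes "0 < e"
  shows "\<exists>c>0. \<forall>w\<in>U. norm (G w) < c \<longrightarrow>
           (\<exists>m\<in>U. \<eta> m = 0 \<and> closed_segment w m \<subseteq> U \<and> dist w m < e)"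
proof -
  obtain e0 where "0 < e0" and e0: "(\<Union>m\<in>{z \<in> closure U. \<eta> z = 0}. ball m e0) \<subseteq> U"
    using compact_subset_open_imp_ball_epsilon_subset[OF compact_zero_set open_U zero_set_subset_U] by blast
  have "continuous_on (closure U) (\<lambda>z. norm (G z))"
    by (intro continuous_on_norm continuous_G)
  moreover have "0 < min e e0"
    using \<open>0 < e\<close> \<open>0 < e0\<close> by simp
  ultimately obtain c where "0 < c" and c: "\<forall>w\<in>closure U. \<bar>norm (G w)\<bar> < c \<longrightarrow>
      (\<exists>m\<in>closure U. norm (G m) = 0 \<and> dist w m < min e e0)"
    using compact_small_values_near_zeros[OF compact_closure_U] by blast
  show ?thesis
  proof (intro exI[of _ c] conjI ballI impI)
    fix w assume w: "w \<in> U" "norm (G w) < c"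
    then have "w \<in> closure U"
      using closure_subset by blast
    with c w(2) obtain m where m: "m \<in> closure U" "G m = 0" "dist w m < min e e0"
      by auto
    then have "\<eta> m = 0"
      using eikonal_eq_closure[OF m(1)] by simp
    then have "ball m e0 \<subseteq> U" "m \<in> U"
      using e0 m(1) zero_set_subset_U by blast+
    moreover have "closed_segment w m \<subseteq> ball m e0"
      using m(3) \<open>0 < e0\<close> by (intro closed_segment_subset convex_ball) (simp_all add: dist_commute)
    ultimately show "\<exists>m\<in>U. \<eta> m = 0 \<and> closed_segment w m \<subseteq> U \<and> dist w m < e"
      using \<open>\<eta> m = 0\<close> m(3) by auto
  qed (rule \<open>0 < c\<close>)
qed

lemma norm_grad_bounded: "\<exists>Gm>0. \<forall>z\<in>closure U. norm (G z) \<le> Gm"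
  using compact_imp_bounded[OF compact_continuous_image[OF continuous_G compact_closure_U]]
  by (auto simp: bounded_pos)

lemma small_outward_component_imp_mem_U:
  assumes "w \<in> closure U" "i \<in> {1..N}" "norm (w - y i) \<le> r" "G w \<bullet> (w - y i) \<le> \<delta> / 2"
  shows "w \<in> U"
proof (rule ccontr)
  assume "w \<notin> U"
  then have "w \<in> frontier U"
    using assms(1) open_U by (simp add: frontier_def interior_open)
  moreover have "w \<notin> ball (y i) r"
    using \<open>w \<notin> U\<close> assms(2) by (auto simp: U_eq)
  then have "norm (w - y i) = r"
    using assms(3) by (simp add: dist_norm norm_minus_commute)
  ultimately have "\<delta> < G w \<bullet> (w - y i)"
    using boundary_outward assms(2) by blast
  then show False
    using assms(4) delta_pos by linarith
qed

lemma boundary_layer: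
  "\<exists>\<rho>>0. \<forall>w\<in>closure U. \<forall>i\<in>{1..N}. norm (w - y i) \<le> r \<longrightarrow> G w \<bullet> (w - y i) \<le> \<delta> / 2 \<longrightarrow>
     (\<exists>j\<in>{1..N}. norm (w - y j) \<le> r - \<rho>)"
proof -
  define Y where "Y = y ` {1..N}"
  define C where "C = (\<Union>i\<in>{1..N}. closure U \<inter> (\<lambda>w. G w \<bullet> (w - y i)) -` {..\<delta> / 2} \<inter> cball (y i) r)"
  have "compact C"
  proof -
    have "closed (closure U \<inter> (\<lambda>w. G w \<bullet> (w - y i)) -` {..\<delta> / 2})" for i
      by (intro continuous_closed_preimage closed_closure closed_atMost continuous_on_inner
          continuous_G continuous_on_diff continuous_on_id continuous_on_const)
    then have "closed C"
      unfolding C_def by (intro closed_UN closed_Int) auto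
    moreover have "C \<subseteq> closure U"
      by (auto simp: C_def)
    ultimately show ?thesis
      using compact_Int_closed[OF compact_closure_U] by (metis inf.absorb2)
  qed
  have "infdist w Y < r" if "w \<in> C" for w
  proof -
    from \<open>w \<in> C\<close> obtain i where "i \<in> {1..N}" "w \<in> closure U" "norm (w - y i) \<le> r" "G w \<bullet> (w - y i) \<le> \<delta> / 2"
      by (auto simp: C_def dist_norm norm_minus_commute)
    then have "w \<in> U"
      by (intro small_outward_component_imp_mem_U)
    then obtain j where "j \<in> {1..N}" "dist (y j) w < r"
      by (auto simp: U_eq)
    then show ?thesis
      using infdist_le[of "y j" Y w] by (auto simp: Y_def dist_commute)
  qed
  moreover have "continuous_on C (\<lambda>w. infdist w Y)"
    by (intro continuous_on_infdist continuous_on_id)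
  ultimately obtain \<rho> where "0 < \<rho>" and \<rho>: "\<forall>w\<in>C. infdist w Y \<le> r - \<rho>"
    using compact_continuous_uniform_gap[OF \<open>compact C\<close>] by blast
  show ?thesis
  proof (intro exI[of _ \<rho>] conjI ballI impI)
    fix w i assume "w \<in> closure U" "i \<in> {1..N}" "norm (w - y i) \<le> r" "G w \<bullet> (w - y i) \<le> \<delta> / 2"
    then have "w \<in> C"
      by (auto simp: C_def dist_norm norm_minus_commute)
    then have "infdist w Y \<le> r - \<rho>"
      using \<rho> by blast
    moreover have "closed Y" "Y \<noteq> {}"
      using \<open>i \<in> {1..N}\<close> by (auto simp: Y_def finite_imp_closed)
    then obtain q where "q \<in> Y" "infdist w Y = dist w q"
      by (rule infdist_attains_inf)
    ultimately show "\<exists>j\<in>{1..N}. norm (w - y j) \<le> r - \<rho>"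
      by (auto simp: Y_def dist_norm)
  qed (rule \<open>0 < \<rho>\<close>)
qed

lemma inward_steps_in_U:
  "\<exists>s0>0. \<forall>w\<in>U. G w \<noteq> 0 \<longrightarrow> (\<forall>\<tau>. 0 \<le> \<tau> \<and> \<tau> \<le> s0 \<longrightarrow> w - \<tau> *\<^sub>R sgn (G w) \<in> U)"
proof -
  obtain \<rho> where "0 < \<rho>" and \<rho>: "\<forall>w\<in>closure U. \<forall>i\<in>{1..N}. norm (w - y i) \<le> r \<longrightarrow>
      G w \<bullet> (w - y i) \<le> \<delta> / 2 \<longrightarrow> (\<exists>j\<in>{1..N}. norm (w - y j) \<le> r - \<rho>)"
    using boundary_layer by blast
  obtain Gm where "0 < Gm" and Gm: "\<forall>z\<in>closure U. norm (G z) \<le> Gm"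
    using norm_grad_bounded by blast
  define \<kappa> where "\<kappa> = \<delta> / (2 * Gm)"
  define s0 where "s0 = min (\<rho> / 2) (2 * \<kappa>)"
  have "0 < s0"
    using \<open>0 < \<rho>\<close> \<open>0 < Gm\<close> delta_pos by (simp add: s0_def \<kappa>_def)
  moreover have "w - \<tau> *\<^sub>R sgn (G w) \<in> U" if "w \<in> U" "G w \<noteq> 0" "0 \<le> \<tau>" "\<tau> \<le> s0" for w \<tau>
  proof -
    have \<nu>: "norm (sgn (G w)) = 1"
      using \<open>G w \<noteq> 0\<close> by (simp add: norm_sgn)
    obtain i where i: "i \<in> {1..N}" "w \<in> ball (y i) r"
      using \<open>w \<in> U\<close> by (auto simp: U_eq)
    have "w \<in> closure U"
      using \<open>w \<in> U\<close> closure_subset by blast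
    show "w - \<tau> *\<^sub>R sgn (G w) \<in> U"
    proof (cases "G w \<bullet> (w - y i) \<le> \<delta> / 2")
      case True
      \<comment> \<open>w may be close to the sphere of ball i, but then it is deep inside some ball j\<close>
      moreover have "norm (w - y i) \<le> r"
        using i(2) by (simp add: dist_norm norm_minus_commute)
      ultimately obtain j where j: "j \<in> {1..N}" "norm (w - y j) \<le> r - \<rho>"
        using \<rho> \<open>w \<in> closure U\<close> i(1) by blast
      then have "w - \<tau> *\<^sub>R sgn (G w) \<in> ball (y j) r"
        using small_step_in_ball[OF j(2) \<nu>] that(3,4) \<open>0 < \<rho>\<close> by (simp add: s0_def)
      then show ?thesis
        using j(1) by (auto simp: U_eq)
    next
      case False
      have "norm (G w) \<le> Gm"
        using Gm \<open>w \<in> closure U\<close> by blast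
      then have "\<kappa> \<le> (\<delta> / 2) / norm (G w)"
        using \<open>G w \<noteq> 0\<close> delta_pos by (simp add: \<kappa>_def frac_le)
      also have "\<dots> \<le> (G w \<bullet> (w - y i)) / norm (G w)"
        using False by (intro divide_right_mono) auto
      also have "\<dots> = sgn (G w) \<bullet> (w - y i)"
        by (simp add: sgn_div_norm divide_inverse_commute)
      finally have "w - \<tau> *\<^sub>R sgn (G w) \<in> ball (y i) r"
        using inward_step_in_ball[OF i(2) \<nu>] that(3,4) by (simp add: s0_def)
      then show ?thesis
        using i(1) by (auto simp: U_eq)
    qed
  qed
  ultimately show ?thesis
    by blast
qed

lemma descent_step:
  assumes "0 < \<theta>" "\<theta> < 1" "0 < c"
  shows "\<exists>s>0. \<forall>w\<in>U. c \<le> norm (G w) \<longrightarrow>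
           (\<exists>w'. closed_segment w w' \<subseteq> U \<and> dist w w' = s \<and> norm (G w') \<le> norm (G w) - \<theta> * s)"
proof -
  obtain s0 where "0 < s0" and s0: "\<forall>w\<in>U. G w \<noteq> 0 \<longrightarrow> (\<forall>\<tau>. 0 \<le> \<tau> \<and> \<tau> \<le> s0 \<longrightarrow> w - \<tau> *\<^sub>R sgn (G w) \<in> U)"
    using inward_steps_in_U by blast
  have "uniformly_continuous_on (closure U) G"
    by (rule compact_uniformly_continuous[OF continuous_G compact_closure_U])
  moreover have "0 < (1 - \<theta>) * c"
    using assms by simp
  ultimately obtain d where "0 < d"
    and d: "\<And>a b. a \<in> closure U \<Longrightarrow> b \<in> closure U \<Longrightarrow> dist b a < d \<Longrightarrow> dist (G b) (G a) < (1 - \<theta>) * c"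
    unfolding uniformly_continuous_on_def by metis
  define s where "s = min s0 (min c (d / 2))"
  have s: "0 < s" "s \<le> s0" "s \<le> c" "s < d"
    using \<open>0 < s0\<close> \<open>0 < c\<close> \<open>0 < d\<close> by (auto simp: s_def)
  show ?thesis
  proof (intro exI[of _ s] conjI ballI impI)
    fix w assume "w \<in> U" and c: "c \<le> norm (G w)"
    define w' where "w' = w - s *\<^sub>R sgn (G w)"
    have "G w \<noteq> 0"
      using c \<open>0 < c\<close> by auto
    have seg: "closed_segment w w' \<subseteq> U"
      unfolding w'_def using s0 \<open>w \<in> U\<close> \<open>G w \<noteq> 0\<close> s by (intro closed_segment_ray_subset) auto
    have "dist w w' = s"
      using \<open>G w \<noteq> 0\<close> s(1) by (simp add: w'_def norm_sgn)
    have "norm (G z - G w) \<le> (1 - \<theta>) * norm (G w)" if "z \<in> closed_segment w w'" for z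
    proof -
      have "dist z w < d"
        using dist_in_closed_segment[OF that] \<open>dist w w' = s\<close> s(4) by (simp add: dist_commute)
      moreover have "z \<in> closure U" "w \<in> closure U"
        using that seg \<open>w \<in> U\<close> closure_subset by auto
      ultimately have "norm (G z - G w) < (1 - \<theta>) * c"
        using d by (simp add: dist_norm)
      also have "\<dots> \<le> (1 - \<theta>) * norm (G w)"
        using c assms(2) by simp
      finally show ?thesis by simp
    qed
    moreover have "\<theta> * s \<le> norm (G w)"
      using c s(1,3) assms(1,2) mult_left_le_one_le[of s \<theta>] by linarith
    ultimately have "norm (G w') \<le> norm (G w) - \<theta> * s"
      using norm_grad_descent[OF seg w'_def \<open>G w \<noteq> 0\<close>] s(1) by simp
    then show "\<exists>w'. closed_segment w w' \<subseteq> U \<and> dist w w' = s \<and> norm (G w') \<le> norm (G w) - \<theta> * s"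
      using seg \<open>dist w w' = s\<close> by blast
  qed (rule s(1))
qed

lemma lipschitz_reachable_zero_set:
  assumes "x \<in> U" "0 < \<theta>" "\<theta> < 1" "0 < e"
  shows "\<exists>m\<in>U. \<eta> m = 0 \<and> lipschitz_reachable U (norm (G x) / \<theta> + e) x m"
proof -
  obtain c where "0 < c" and c: "\<forall>w\<in>U. norm (G w) < c \<longrightarrow>
      (\<exists>m\<in>U. \<eta> m = 0 \<and> closed_segment w m \<subseteq> U \<and> dist w m < e)"
    using zero_set_near_small_gradient[OF \<open>0 < e\<close>] by blast
  obtain s where "0 < s" and s: "\<forall>w\<in>U. c \<le> norm (G w) \<longrightarrow>
      (\<exists>w'. closed_segment w w' \<subseteq> U \<and> dist w w' = s \<and> norm (G w') \<le> norm (G w) - \<theta> * s)"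
    using descent_step[OF assms(2,3) \<open>0 < c\<close>] by blast
  obtain w L where wL: "lipschitz_reachable U L x w" "norm (G w) < c" "\<theta> * L \<le> norm (G x) - norm (G w)"
    using descent_reaches_sublevel[of x U s \<theta> "\<lambda>z. norm (G z)" c] assms(1,2) \<open>0 < s\<close> s by auto
  obtain m where m: "m \<in> U" "\<eta> m = 0" "closed_segment w m \<subseteq> U" "dist w m < e"
    using c wL(2) lipschitz_reachable_imp_mem[OF wL(1)] by blast
  have "lipschitz_reachable U (L + dist w m) x m"
    by (rule lipschitz_reachable_trans[OF wL(1) lipschitz_reachable_segment[OF m(3)]])
  moreover have "\<theta> * L \<le> norm (G x)"
    using wL(3) norm_ge_zero[of "G w"] by linarith
  then have "L \<le> norm (G x) / \<theta>"
    using assms(2) by (simp add: pos_le_divide_eq mult.commute)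
  then have "L + dist w m \<le> norm (G x) / \<theta> + e"
    using m(4) by linarith
  ultimately show ?thesis
    using m(1,2) lipschitz_reachable_mono by blast
qed

lemma dist_U_zero_set_le_norm_grad:
  assumes "x \<in> U"
  shows "dist_U U x {z \<in> U. \<eta> z = 0} \<le> ennreal (norm (G x))"
proof (rule ennreal_le_epsilon)
  fix e :: real assume "0 < e"
  obtain \<theta> where \<theta>: "0 < \<theta>" "\<theta> < 1" and "norm (G x) / \<theta> \<le> norm (G x) + e / 2"
    using ratio_close_to_one[of "norm (G x)" "e / 2"] \<open>0 < e\<close> by auto
  obtain m where "m \<in> U" "\<eta> m = 0" "lipschitz_reachable U (norm (G x) / \<theta> + e / 2) x m"
    using lipschitz_reachable_zero_set[OF assms \<theta>, of "e / 2"] \<open>0 < e\<close> by auto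
  then have "dist_U U x {z \<in> U. \<eta> z = 0} \<le> ennreal (norm (G x) / \<theta> + e / 2)"
    by (intro dist_U_le_lipschitz_reachable) auto
  also have "\<dots> \<le> ennreal (norm (G x) + e)"
    using \<open>norm (G x) / \<theta> \<le> norm (G x) + e / 2\<close> by (intro ennreal_leI) simp
  finally show "dist_U U x {z \<in> U. \<eta> z = 0} \<le> ennreal (norm (G x)) + ennreal e"
    using \<open>0 < e\<close> by (simp add: ennreal_plus)
qed

lemma norm_grad_le_dist_U_zero_set:
  "ennreal (norm (G x)) \<le> dist_U U x {z \<in> U. \<eta> z = 0}"
  unfolding dist_U_def
proof (rule INF_greatest, clarify)
  fix \<alpha> assume "abs_cont_on {0..1} \<alpha>" "\<alpha> ` {0..1} \<subseteq> U" "x = \<alpha> 0" "\<alpha> 1 \<in> U" "\<eta> (\<alpha> 1) = 0"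
  then show "ennreal (norm (G (\<alpha> 0))) \<le> curve_length \<alpha>"
    using norm_grad_le_curve_length abs_cont_on_imp_continuous_on by blast
qed

theorem dist_U_zero_set_eq_norm_grad:
  "x \<in> U \<Longrightarrow> dist_U U x {z \<in> U. \<eta> z = 0} = ennreal (norm (G x))"
  using dist_U_zero_set_le_norm_grad norm_grad_le_dist_U_zero_set by (rule antisym)

end

lemma has_derivative_grad:
  fixes f :: "'a::euclidean_space \<Rightarrow> real"
  assumes "f differentiable (at z)"
  shows "(f has_derivative (\<lambda>v. grad f z \<bullet> v)) (at z)"
proof -
  let ?D = "frechet_derivative f (at z)"
  have "linear ?D"
    by (rule linear_frechet_derivative[OF assms])
  have "?D v = grad f z \<bullet> v" for v
  proof -
    have "?D v = (\<Sum>i\<in>Basis. (v \<bullet> i) * (?D i \<bullet> 1))"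
      using Linear_Algebra.linear_componentwise[OF \<open>linear ?D\<close>, of v 1] by simp
    also have "\<dots> = (\<Sum>i\<in>Basis. ?D i * (i \<bullet> v))"
      by (simp add: inner_commute mult.commute)
    also have "\<dots> = grad f z \<bullet> v"
      by (simp add: grad_def inner_sum_left)
    finally show ?thesis .
  qed
  moreover have "(f has_derivative ?D) (at z)"
    using assms frechet_derivative_works by blast
  ultimately show ?thesis
    by (metis ext)
qed

lemma Ck_closure_imp_continuous_on: "Ck_closure k U f \<Longrightarrow> continuous_on (closure U) f"
  by (cases k) auto

lemma Lim_within_eq_continuous_extension:
  assumes "continuous_on (closure U) g" "\<And>w. w \<in> U \<Longrightarrow> h w = g w" "z \<in> closure U" "z \<notin> U"
  shows "Lim (at z within U) h = g z"
proof (rule tendsto_Lim)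
  show "\<not> trivial_limit (at z within U)"
    using assms(3,4) by (simp add: trivial_limit_within closure_def)
  have "(g \<longlongrightarrow> g z) (at z within U)"
    using assms(1,3) closure_subset by (auto simp: continuous_on_def intro: tendsto_within_subset)
  moreover have "\<forall>\<^sub>F w in at z within U. g w = h w"
    using assms(2) by (auto simp: eventually_at_filter)
  ultimately show "(h \<longlongrightarrow> g z) (at z within U)"
    by (rule Lim_transform_eventually)
qed

lemma Ck_closure_Suc_gradient:
  fixes f :: "'a::euclidean_space \<Rightarrow> real"
  assumes "open U" "Ck_closure (Suc k) U f"
  obtains G where "continuous_on (closure U) G"
    "\<And>z. z \<in> U \<Longrightarrow> (f has_derivative (\<lambda>v. G z \<bullet> v)) (at z)"
    "\<And>z. z \<in> U \<Longrightarrow> G z = grad f z"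
    "\<And>z. z \<in> frontier U \<Longrightarrow> grad_cl U f z = G z"
proof -
  have "\<forall>i\<in>Basis. \<exists>g. continuous_on (closure U) g \<and> (\<forall>z\<in>U. g z = frechet_derivative f (at z) i)"
    using assms(2) Ck_closure_imp_continuous_on by (metis Ck_closure.simps(2))
  then obtain g where g: "\<And>i. i \<in> Basis \<Longrightarrow> continuous_on (closure U) (g i)"
    "\<And>i z. i \<in> Basis \<Longrightarrow> z \<in> U \<Longrightarrow> g i z = frechet_derivative f (at z) i"
    by metis
  define G where "G z = (\<Sum>i\<in>Basis. g i z *\<^sub>R i)" for z
  have G_grad: "G z = grad f z" if "z \<in> U" for z
    unfolding G_def grad_def using g(2) that by simp
  show thesis
  proof (rule that)
    show "continuous_on (closure U) G"
      unfolding G_def by (intro continuous_on_sum continuous_on_scaleR g(1) continuous_on_const)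
    show "(f has_derivative (\<lambda>v. G z \<bullet> v)) (at z)" if "z \<in> U" for z
      using has_derivative_grad[of f z] G_grad[OF that] assms(2) that by simp
    show "G z = grad f z" if "z \<in> U" for z
      using G_grad[OF that] .
    show "grad_cl U f z = G z" if "z \<in> frontier U" for z
    proof -
      have "z \<in> closure U" "z \<notin> U"
        using that \<open>open U\<close> by (auto simp: frontier_def interior_open)
      have "Lim (at z within U) (\<lambda>w. frechet_derivative f (at w) i) = g i z" if "i \<in> Basis" for i
        by (rule Lim_within_eq_continuous_extension[OF g(1)[OF that] _ \<open>z \<in> closure U\<close> \<open>z \<notin> U\<close>])
          (simp add: g(2)[OF that])
      then show ?thesis
        unfolding grad_cl_def G_def by simp
    qed
  qed
qed

lemma nvec_bound_imp_radial_bound: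
  assumes "0 < \<zeta>" "i \<in> {1..N}" "norm (z - y i) = \<zeta> / 2" "\<And>n. n \<in> nvec \<zeta> N y z \<Longrightarrow> \<delta> < v \<bullet> n"
  shows "\<delta> * (\<zeta> / 2) < v \<bullet> (z - y i)"
proof -
  have "(1 / norm (z - y i)) *\<^sub>R (z - y i) \<in> nvec \<zeta> N y z"
    unfolding nvec_def using assms(2,3) by auto
  then have "\<delta> < v \<bullet> ((1 / norm (z - y i)) *\<^sub>R (z - y i))"
    by (rule assms(4))
  then have "\<delta> < 1 / (\<zeta> / 2) * (v \<bullet> (z - y i))"
    unfolding inner_scaleR_right assms(3) .
  then show ?thesis
    using assms(1) by (simp add: field_simps)
qed

lemma classD_imp_eikonal_balls:
  fixes \<eta> :: "'a::euclidean_space \<Rightarrow> real"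
  assumes "0 < \<zeta>" "1 \<le> \<beta>" "\<eta> \<in> classD \<zeta> N y \<beta>"
  obtains G \<delta> where "eikonal_balls (UU \<zeta> N y) \<eta> G (\<zeta> / 2) N y \<delta>"
proof -
  define U where "U = UU \<zeta> N y"
  have U_eq: "U = (\<Union>i\<in>{1..N}. ball (y i) (\<zeta> / 2))"
    by (simp add: U_def UU_def)
  then have "open U"
    by auto
  obtain k where "\<beta> = Suc k"
    using assms(2) by (cases \<beta>) auto
  then have "Ck_closure (Suc k) U \<eta>" and eik: "\<And>z. z \<in> U \<Longrightarrow> (norm (grad \<eta> z))\<^sup>2 = 2 * \<eta> z"
    using assms(3) by (auto simp: classD_def U_def)
  obtain \<delta> where "0 < \<delta>" and \<delta>: "\<And>z n. z \<in> frontier U \<Longrightarrow> n \<in> nvec \<zeta> N y z \<Longrightarrow> \<delta> < grad_cl U \<eta> z \<bullet> n"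
    using assms(3) by (auto simp: classD_def U_def)
  obtain G where G: "continuous_on (closure U) G"
    "\<And>z. z \<in> U \<Longrightarrow> (\<eta> has_derivative (\<lambda>v. G z \<bullet> v)) (at z)"
    "\<And>z. z \<in> U \<Longrightarrow> G z = grad \<eta> z"
    "\<And>z. z \<in> frontier U \<Longrightarrow> grad_cl U \<eta> z = G z"
    using Ck_closure_Suc_gradient[OF \<open>open U\<close> \<open>Ck_closure (Suc k) U \<eta>\<close>] by blast
  have "eikonal_balls U \<eta> G (\<zeta> / 2) N y (\<delta> * (\<zeta> / 2))"
  proof unfold_locales
    show "continuous_on (closure U) \<eta>"
      using Ck_closure_imp_continuous_on[OF \<open>Ck_closure (Suc k) U \<eta>\<close>] .
    show "\<delta> * (\<zeta> / 2) < G z \<bullet> (z - y i)"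
      if "z \<in> frontier U" "i \<in> {1..N}" "norm (z - y i) = \<zeta> / 2" for z i
      using nvec_bound_imp_radial_bound[where y = y and z = z and i = i, OF assms(1) that(2,3)]
        \<delta>[OF that(1)] G(4)[OF that(1)] by simp
  qed (use \<open>open U\<close> G eik U_eq \<open>0 < \<delta>\<close> assms(1) in auto)
  then show thesis
    using that by (simp add: U_def)
qed

theorem theoremD4:
  fixes \<zeta> :: real and \<beta> N :: nat and y :: "nat \<Rightarrow> 'a::euclidean_space" and \<eta> :: "'a \<Rightarrow> real"
  assumes "\<zeta> > 0" and "\<beta> \<ge> 2"
    and "\<eta> \<in> classD \<zeta> N y \<beta>"
    and "x \<in> UU \<zeta> N y"
  shows "dist_U (UU \<zeta> N y) x {z \<in> UU \<zeta> N y. \<eta> z = 0} < \<infinity> \<and>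
         \<eta> x = (enn2real (dist_U (UU \<zeta> N y) x {z \<in> UU \<zeta> N y. \<eta> z = 0}))\<^sup>2 / 2"
proof -
  have "1 \<le> \<beta>"
    using assms(2) by simp
  then obtain G \<delta> where "eikonal_balls (UU \<zeta> N y) \<eta> G (\<zeta> / 2) N y \<delta>"
    using classD_imp_eikonal_balls[OF assms(1) _ assms(3)] by blast
  then interpret eikonal_balls "UU \<zeta> N y" \<eta> G "\<zeta> / 2" N y \<delta> .
  have "dist_U (UU \<zeta> N y) x {z \<in> UU \<zeta> N y. \<eta> z = 0} = ennreal (norm (G x))"
    by (rule dist_U_zero_set_eq_norm_grad[OF assms(4)])
  moreover have "\<eta> x = (norm (G x))\<^sup>2 / 2"
    using eikonal_eq[OF assms(4)] by simp
  ultimately show ?thesis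
    by simp
qed

end
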